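(* Let $\mathcal{N} = (W,(R_{a})_{a\in Ag},(Q_{a})_{a \in Ag},v)$ be a proper relational model for introspective knowledge and belief over $Ag$, and let $\mathcal{M}_{\mathcal{N}}$ and $f: W \to \mathcal{F}(S_{\mathcal{N}})$ be as constructed below. Then for all formulas $\phi \in \mathcal{L}_{KB}(Ag)$ and all $w \in W$: $\mathcal{N},w\models\phi$ if and only if $\mathcal{M}_{\mathcal{N}},f(w)\models\phi$.
   Context: $Ag$ is a finite set of agents, $\mathfrak{P}$ a countable set of atoms. A relational model for introspective knowledge and belief is $(W,(R_{a}),(Q_{a}),v)$ with $W$ nonempty, each $R_{a}$ an equivalence relation on $W$ (class of $w$ written $[w]_{a}$), each $Q_{a} \subseteq R_{a}$ serial and constant on $R_{a}$-classes (if $wR_{a}w'$ then $Q_{a}(w)=Q_{a}(w')$, where $Q_{a}(w)=\{u : wQ_{a}u\}$), and $v:\mathfrak{P}\to 2^{W}$. It is proper if $|\bigcap_{a\in Ag}[w]_{a}|=1$ for all $w$. Relational semantics: $w\models P$ iff $w\in v(P)$; $\bot$ false; implication classical; $w\models K_{a}\phi$ iff $w'\models\phi$ for all $w'$ with $wR_{a}w'$; $w\models B_{a}\phi$ iff $w'\models\phi$ for all $w'$ with $wQ_{a}w'$. Construction: $N_{\mathcal{N}}=\{([w]_{a},a): w\in W, a\in Ag\}$; $V_{\mathcal{N}}([w]_{a},a)=a$; $e$ is projection to the first coordinate; $S_{\mathcal{N}}=\{F\subseteq N_{\mathcal{N}} : \bigcap_{n\in F}e(n)\neq\emptyset\}$;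 $f(w)=\{([w]_{a},a): a\in Ag\}$, which is a bijection $W\to\mathcal{F}(S_{\mathcal{N}})$ by properness; $L_{\mathcal{N}}(P)=\{f(w): w\in v(P)\}$; for each $a$, $S_{\mathcal{N},a}$ is the simplicial complex whose facets are $\{F\in\mathcal{F}(S_{\mathcal{N}}) : f^{-1}(F)\,Q_{a}\,f^{-1}(F)\}$ (i.e. all subsets of these facets); $\mathcal{M}_{\mathcal{N}}=(N_{\mathcal{N}},V_{\mathcal{N}},S_{\mathcal{N}},\{S_{\mathcal{N},a}\}_{a\in Ag},L_{\mathcal{N}})$. Simplicial semantics at a facet $X$ of $S_{\mathcal{N}}$, with $\pi_{a}(X)$ the unique $a$-colored node of $X$: $X\models P$ iff $X\in L_{\mathcal{N}}(P)$; $\bot$ false; implication classical; $X\models K_{a}\phi$ iff $Y\models\phi$ for all facets $Y$ of $S_{\mathcal{N}}$ with $\pi_{a}(Y)=\pi_{a}(X)$; $X\models B_{a}\phi$ iff $Y\models\phi$ for all facets $Y$ of $S_{\mathcal{N},a}$ with $\pi_{a}(Y)=\pi_{a}(X)$. The language $\mathcal{L}_{KB}(Ag)$ is $\phi ::= P\mid\bot\mid\phi\rightarrow\psi\mid K_{a}\phi\mid B_{a}\phi$. *)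

theory Defs
  imports "HOL-Library.Countable"
begin

datatype ('p, 'ag) fml =
    Atom 'p
  | Bot
  | Imp "('p, 'ag) fml" "('p, 'ag) fml"
  | K 'ag "('p, 'ag) fml"
  | B 'ag "('p, 'ag) fml"

fun agents :: "('p, 'ag) fml \<Rightarrow> 'ag set" where
  "agents (Atom P) = {}"
| "agents Bot = {}"
| "agents (Imp \<phi> \<psi>) = agents \<phi> \<union> agents \<psi>"
| "agents (K a \<phi>) = insert a (agents \<phi>)"
| "agents (B a \<phi>) = insert a (agents \<phi>)"

definition in_LKB :: "'ag set \<Rightarrow> ('p, 'ag) fml \<Rightarrow> bool" where
  "in_LKB Ag \<phi> \<longleftrightarrow> agents \<phi> \<subseteq> Ag"

definition rel_model ::
  "'ag set \<Rightarrow> 'w set \<Rightarrow> ('ag \<Rightarrow> ('w \<times> 'w) set) \<Rightarrow> ('ag \<Rightarrow> ('w \<times> 'w) set)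
   \<Rightarrow> ('p \<Rightarrow> 'w set) \<Rightarrow> bool" where
  "rel_model Ag W R Q v \<longleftrightarrow>
     finite Ag \<and> W \<noteq> {} \<and>
     (\<forall>a\<in>Ag. equiv W (R a)) \<and>
     (\<forall>a\<in>Ag. Q a \<subseteq> R a) \<and>
     (\<forall>a\<in>Ag. \<forall>w\<in>W. \<exists>u. (w, u) \<in> Q a) \<and>
     (\<forall>a\<in>Ag. \<forall>w w'. (w, w') \<in> R a \<longrightarrow> Q a `` {w} = Q a `` {w'}) \<and>
     (\<forall>P. v P \<subseteq> W)"

definition proper ::
  "'ag set \<Rightarrow> 'w set \<Rightarrow> ('ag \<Rightarrow> ('w \<times> 'w) set) \<Rightarrow> bool" where
  "proper Ag W R \<longleftrightarrow> (\<forall>w\<in>W. card (W \<inter> (\<Inter>a\<in>Ag. R a `` {w})) = 1)"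

fun rsat ::
  "('ag \<Rightarrow> ('w \<times> 'w) set) \<Rightarrow> ('ag \<Rightarrow> ('w \<times> 'w) set) \<Rightarrow> ('p \<Rightarrow> 'w set)
   \<Rightarrow> 'w \<Rightarrow> ('p, 'ag) fml \<Rightarrow> bool" where
  "rsat R Q v w (Atom P) \<longleftrightarrow> w \<in> v P"
| "rsat R Q v w Bot \<longleftrightarrow> False"
| "rsat R Q v w (Imp \<phi> \<psi>) \<longleftrightarrow> (rsat R Q v w \<phi> \<longrightarrow> rsat R Q v w \<psi>)"
| "rsat R Q v w (K a \<phi>) \<longleftrightarrow> (\<forall>w'. (w, w') \<in> R a \<longrightarrow> rsat R Q v w' \<phi>)"
| "rsat R Q v w (B a \<phi>) \<longleftrightarrow> (\<forall>w'. (w, w') \<in> Q a \<longrightarrow> rsat R Q v w' \<phi>)"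

definition facets :: "'n set set \<Rightarrow> 'n set set" where
  "facets S = {X \<in> S. \<forall>Y\<in>S. X \<subseteq> Y \<longrightarrow> Y = X}"

definition downclose :: "'n set set \<Rightarrow> 'n set set" where
  "downclose A = {Z. \<exists>F\<in>A. Z \<subseteq> F}"

definition pi_col :: "('n \<Rightarrow> 'ag) \<Rightarrow> 'ag \<Rightarrow> 'n set \<Rightarrow> 'n" where
  "pi_col V a X = (THE n. n \<in> X \<and> V n = a)"

text \<open>Simplicial model (N, V, S, (S_a), L); satisfaction at a facet X of S.\<close>
fun ssat ::
  "'n set \<Rightarrow> ('n \<Rightarrow> 'ag) \<Rightarrow> 'n set set \<Rightarrow> ('ag \<Rightarrow> 'n set set) \<Rightarrow> ('p \<Rightarrow> 'n set set)
   \<Rightarrow> 'n set \<Rightarrow> ('p, 'ag) fml \<Rightarrow> bool" where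
  "ssat N V S Sa L X (Atom P) \<longleftrightarrow> X \<in> L P"
| "ssat N V S Sa L X Bot \<longleftrightarrow> False"
| "ssat N V S Sa L X (Imp \<phi> \<psi>) \<longleftrightarrow> (ssat N V S Sa L X \<phi> \<longrightarrow> ssat N V S Sa L X \<psi>)"
| "ssat N V S Sa L X (K a \<phi>) \<longleftrightarrow>
     (\<forall>Y\<in>facets S. pi_col V a Y = pi_col V a X \<longrightarrow> ssat N V S Sa L Y \<phi>)"
| "ssat N V S Sa L X (B a \<phi>) \<longleftrightarrow>
     (\<forall>Y\<in>facets (Sa a). pi_col V a Y = pi_col V a X \<longrightarrow> ssat N V S Sa L Y \<phi>)"

definition NN :: "'ag set \<Rightarrow> 'w set \<Rightarrow> ('ag \<Rightarrow> ('w \<times> 'w) set) \<Rightarrow> ('w set \<times> 'ag) set" where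
  "NN Ag W R = {(R a `` {w}, a) | w a. w \<in> W \<and> a \<in> Ag}"

definition VN :: "('w set \<times> 'ag) \<Rightarrow> 'ag" where
  "VN n = snd n"

definition eN :: "('w set \<times> 'ag) \<Rightarrow> 'w set" where
  "eN n = fst n"

definition SN :: "'ag set \<Rightarrow> 'w set \<Rightarrow> ('ag \<Rightarrow> ('w \<times> 'w) set) \<Rightarrow> ('w set \<times> 'ag) set set" where
  "SN Ag W R = {F. F \<subseteq> NN Ag W R \<and> (\<Inter>n\<in>F. eN n) \<noteq> {}}"

definition fN :: "'ag set \<Rightarrow> ('ag \<Rightarrow> ('w \<times> 'w) set) \<Rightarrow> 'w \<Rightarrow> ('w set \<times> 'ag) set" where
  "fN Ag R w = {(R a `` {w}, a) | a. a \<in> Ag}"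

definition LN :: "'ag set \<Rightarrow> ('ag \<Rightarrow> ('w \<times> 'w) set) \<Rightarrow> ('p \<Rightarrow> 'w set)
   \<Rightarrow> 'p \<Rightarrow> ('w set \<times> 'ag) set set" where
  "LN Ag R v P = {fN Ag R w | w. w \<in> v P}"

definition SNa :: "'ag set \<Rightarrow> 'w set \<Rightarrow> ('ag \<Rightarrow> ('w \<times> 'w) set) \<Rightarrow> ('ag \<Rightarrow> ('w \<times> 'w) set)
   \<Rightarrow> 'ag \<Rightarrow> ('w set \<times> 'ag) set set" where
  "SNa Ag W R Q a = downclose
     {F \<in> facets (SN Ag W R).
        (inv_into W (fN Ag R) F, inv_into W (fN Ag R) F) \<in> Q a}"

end

theory Submission
  imports Defs
begin

text \<open>The facets of S_N are exactly the sets f(w): the classes of a simplex share a world x,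
  so the simplex lies in f(x), and each f(w) is maximal; properness makes f injective.
  The a-coloured node of f(w) is ([w]_a, a), so two facets share their a-node iff the worlds
  are R_a-related, matching the clause for K_a. The facets of S_N,a are the f(u) with u Q_a u,
  and since Q_a \<subseteq> R_a is constant on R_a-classes, w Q_a u iff w R_a u and u Q_a u,
  matching the clause for B_a.\<close>

lemma facets_downclose:
  assumes "\<And>F G. F \<in> A \<Longrightarrow> G \<in> A \<Longrightarrow> F \<subseteq> G \<Longrightarrow> F = G"
  shows "facets (downclose A) = A"
  using assms unfolding facets_def downclose_def by blast

lemma pi_col_fN:
  assumes "a \<in> Ag"
  shows "pi_col VN a (fN Ag R w) = (R a `` {w}, a)"
  unfolding pi_col_def fN_def VN_def
  by (rule the_equality) (use assms in auto)

locale kb_model =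
  fixes Ag :: "'ag set" and W :: "'w set"
    and R Q :: "'ag \<Rightarrow> ('w \<times> 'w) set" and v :: "'p \<Rightarrow> 'w set"
  assumes rel_model: "rel_model Ag W R Q v"
begin

abbreviation msat :: "('w set \<times> 'ag) set \<Rightarrow> ('p, 'ag) fml \<Rightarrow> bool" where
  "msat \<equiv> ssat (NN Ag W R) VN (SN Ag W R) (SNa Ag W R Q) (LN Ag R v)"

lemma equiv_R: "a \<in> Ag \<Longrightarrow> equiv W (R a)"
  using rel_model unfolding rel_model_def by auto

lemma R_subset: "a \<in> Ag \<Longrightarrow> R a \<subseteq> W \<times> W"
  using equiv_R unfolding equiv_def refl_on_def by auto

lemma R_refl: "a \<in> Ag \<Longrightarrow> w \<in> W \<Longrightarrow> w \<in> R a `` {w}"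
  using equiv_R unfolding equiv_def refl_on_def by auto

lemma R_class_eq: "a \<in> Ag \<Longrightarrow> x \<in> R a `` {u} \<Longrightarrow> R a `` {x} = R a `` {u}"
  using equiv_class_eq[OF equiv_R] by blast

lemma R_class_eq_iff:
  "a \<in> Ag \<Longrightarrow> u \<in> W \<Longrightarrow> w \<in> W \<Longrightarrow> R a `` {u} = R a `` {w} \<longleftrightarrow> (w, u) \<in> R a"
  using equiv_R by (metis eq_equiv_class_iff sym_def equiv_def)

lemma pi_col_fN_eq_iff:
  assumes "a \<in> Ag" "u \<in> W" "w \<in> W"
  shows "pi_col VN a (fN Ag R u) = pi_col VN a (fN Ag R w) \<longleftrightarrow> (w, u) \<in> R a"
  using assms by (simp add: pi_col_fN R_class_eq_iff)

lemma Q_iff_R_Q_refl: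
  assumes "a \<in> Ag"
  shows "(w, u) \<in> Q a \<longleftrightarrow> u \<in> W \<and> (u, u) \<in> Q a \<and> (w, u) \<in> R a"
proof -
  have QR: "Q a \<subseteq> R a" and Q_const: "\<And>x y. (x, y) \<in> R a \<Longrightarrow> Q a `` {x} = Q a `` {y}"
    using rel_model assms unfolding rel_model_def by auto
  show ?thesis
  proof
    assume wu: "(w, u) \<in> Q a"
    then have "(w, u) \<in> R a" using QR by blast
    moreover from this have "(u, u) \<in> Q a" using wu Q_const by blast
    ultimately show "u \<in> W \<and> (u, u) \<in> Q a \<and> (w, u) \<in> R a"
      using R_subset[OF assms] by blast
  next
    assume "u \<in> W \<and> (u, u) \<in> Q a \<and> (w, u) \<in> R a"
    then show "(w, u) \<in> Q a" using Q_const by blast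
  qed
qed

lemma fN_in_SN: "w \<in> W \<Longrightarrow> fN Ag R w \<in> SN Ag W R"
proof -
  assume w: "w \<in> W"
  then have "w \<in> (\<Inter>n\<in>fN Ag R w. eN n)"
    unfolding fN_def eN_def using R_refl by auto
  then show ?thesis unfolding SN_def NN_def fN_def using w by blast
qed

lemma subset_fN:
  assumes "X \<subseteq> NN Ag W R" "x \<in> (\<Inter>n\<in>X. eN n)"
  shows "X \<subseteq> fN Ag R x"
proof
  fix n assume n: "n \<in> X"
  then obtain u a where u: "n = (R a `` {u}, a)" "a \<in> Ag"
    using assms(1) unfolding NN_def by blast
  have "x \<in> R a `` {u}" using assms(2) n u unfolding eN_def by auto
  then have "R a `` {x} = R a `` {u}" using R_class_eq u(2) by blast
  then show "n \<in> fN Ag R x" unfolding fN_def using u by auto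
qed

lemma SN_subset_fN:
  assumes "X \<in> SN Ag W R"
  obtains x where "x \<in> W" "X \<subseteq> fN Ag R x"
proof (cases "X = {}")
  case True
  then show ?thesis using rel_model that unfolding rel_model_def by auto
next
  case False
  obtain x where x: "x \<in> (\<Inter>n\<in>X. eN n)" using assms unfolding SN_def by auto
  from False obtain n where "n \<in> X" by auto
  with assms obtain u a where "n = (R a `` {u}, a)" "a \<in> Ag"
    unfolding NN_def SN_def by blast
  with x \<open>n \<in> X\<close> have "x \<in> R a `` {u}" unfolding eN_def by auto
  with \<open>a \<in> Ag\<close> have "x \<in> W" using R_subset by blast
  moreover have "X \<subseteq> fN Ag R x" using subset_fN[OF _ x] assms unfolding SN_def by auto
  ultimately show ?thesis using that by blast
qed

lemma fN_maximal:
  assumes w: "w \<in> W" and Y: "Y \<in> SN Ag W R" "fN Ag R w \<subseteq> Y"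
  shows "Y = fN Ag R w"
proof -
  obtain x where x: "x \<in> (\<Inter>n\<in>Y. eN n)" using Y unfolding SN_def by auto
  have "R a `` {x} = R a `` {w}" if "a \<in> Ag" for a
  proof -
    have "(R a `` {w}, a) \<in> Y" using Y(2) that unfolding fN_def by auto
    then have "x \<in> R a `` {w}" using x unfolding eN_def by auto
    then show ?thesis using that R_class_eq by blast
  qed
  then have "fN Ag R x = fN Ag R w" unfolding fN_def by auto
  then show ?thesis using subset_fN[OF _ x] Y unfolding SN_def by auto
qed

lemma facets_SN: "facets (SN Ag W R) = fN Ag R ` W"
proof
  show "facets (SN Ag W R) \<subseteq> fN Ag R ` W"
  proof
    fix X assume X: "X \<in> facets (SN Ag W R)"
    then obtain x where "x \<in> W" "X \<subseteq> fN Ag R x"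
      using SN_subset_fN unfolding facets_def by blast
    then show "X \<in> fN Ag R ` W" using X fN_in_SN unfolding facets_def by auto
  qed
  show "fN Ag R ` W \<subseteq> facets (SN Ag W R)"
    using fN_in_SN fN_maximal unfolding facets_def by blast
qed

end

locale proper_kb_model = kb_model +
  assumes proper: "proper Ag W R"
begin

lemma inj_on_fN: "inj_on (fN Ag R) W"
proof
  fix w w' assume w: "w \<in> W" "w' \<in> W" "fN Ag R w = fN Ag R w'"
  have "R a `` {w'} = R a `` {w}" if "a \<in> Ag" for a
    using pi_col_fN[OF that, of R w] pi_col_fN[OF that, of R w'] w(3) by auto
  then have "w \<in> W \<inter> (\<Inter>a\<in>Ag. R a `` {w})" "w' \<in> W \<inter> (\<Inter>a\<in>Ag. R a `` {w})"
    using w R_refl by (metis IntI INT_I)+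
  moreover have "card (W \<inter> (\<Inter>a\<in>Ag. R a `` {w})) = 1"
    using proper w(1) unfolding proper_def by auto
  ultimately show "w = w'" by (metis card_1_singletonE singletonD)
qed

lemma facets_SNa: "facets (SNa Ag W R Q a) = fN Ag R ` {u \<in> W. (u, u) \<in> Q a}"
proof -
  let ?A = "{F \<in> facets (SN Ag W R).
        (inv_into W (fN Ag R) F, inv_into W (fN Ag R) F) \<in> Q a}"
  have "facets (SNa Ag W R Q a) = ?A"
    unfolding SNa_def by (rule facets_downclose) (auto simp: facets_def)
  also have "?A = fN Ag R ` {u \<in> W. (u, u) \<in> Q a}"
    using facets_SN inv_into_f_f[OF inj_on_fN] by auto
  finally show ?thesis .
qed

lemma fN_in_LN_iff: "w \<in> W \<Longrightarrow> fN Ag R w \<in> LN Ag R v P \<longleftrightarrow> w \<in> v P"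
  using rel_model inj_onD[OF inj_on_fN] unfolding LN_def rel_model_def by blast

theorem truth_lemma:
  assumes "in_LKB Ag \<phi>" "w \<in> W"
  shows "rsat R Q v w \<phi> \<longleftrightarrow> msat (fN Ag R w) \<phi>"
  using assms
proof (induction \<phi> arbitrary: w)
  case (Atom P)
  then show ?case by (simp add: fN_in_LN_iff)
next
  case Bot
  then show ?case by simp
next
  case (Imp \<phi> \<psi>)
  then show ?case by (simp add: in_LKB_def)
next
  case (K a \<phi>)
  then have a: "a \<in> Ag" and IH: "\<And>u. u \<in> W \<Longrightarrow> rsat R Q v u \<phi> \<longleftrightarrow> msat (fN Ag R u) \<phi>"
    by (auto simp: in_LKB_def)
  have "rsat R Q v w (K a \<phi>) \<longleftrightarrow> (\<forall>u\<in>W. (w, u) \<in> R a \<longrightarrow> msat (fN Ag R u) \<phi>)"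
    using R_subset[OF a] IH by auto
  also have "\<dots> \<longleftrightarrow> msat (fN Ag R w) (K a \<phi>)"
    using facets_SN pi_col_fN_eq_iff[OF a _ \<open>w \<in> W\<close>] by auto
  finally show ?case .
next
  case (B a \<phi>)
  then have a: "a \<in> Ag" and IH: "\<And>u. u \<in> W \<Longrightarrow> rsat R Q v u \<phi> \<longleftrightarrow> msat (fN Ag R u) \<phi>"
    by (auto simp: in_LKB_def)
  have "rsat R Q v w (B a \<phi>) \<longleftrightarrow>
      (\<forall>u\<in>W. (u, u) \<in> Q a \<longrightarrow> (w, u) \<in> R a \<longrightarrow> msat (fN Ag R u) \<phi>)"
    using Q_iff_R_Q_refl[OF a, of w] IH by auto
  also have "\<dots> \<longleftrightarrow> msat (fN Ag R w) (B a \<phi>)"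
    using facets_SNa pi_col_fN_eq_iff[OF a _ \<open>w \<in> W\<close>] by auto
  finally show ?case .
qed

end

theorem lemma6:
  fixes Ag :: "'ag set" and W :: "'w set"
    and R Q :: "'ag \<Rightarrow> ('w \<times> 'w) set" and v :: "'p::countable \<Rightarrow> 'w set"
  assumes "rel_model Ag W R Q v"
    and "proper Ag W R"
    and "in_LKB Ag \<phi>"
    and "w \<in> W"
  shows "rsat R Q v w \<phi> \<longleftrightarrow>
         ssat (NN Ag W R) VN (SN Ag W R) (SNa Ag W R Q) (LN Ag R v) (fN Ag R w) \<phi>"
proof -
  interpret proper_kb_model Ag W R Q v
    using assms(1,2) by unfold_locales
  show ?thesis using truth_lemma[OF assms(3,4)] .
qed

end
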